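(* Let $(X,Y)$ be a random pair with $X\in\mathbb{R}^d$ and $Y\in\{+1,-1\}$ with arbitrary joint distribution, and let $p_1(x)=\Pr(Y=+1\mid X=x)$. Let $\alpha\in[0,1)$ and let $\varphi$ be one of the losses $\varphi_{\mathrm{LR}},\varphi_{\mathrm{LS},\alpha},\varphi_{\mathrm{MLS},\alpha},\varphi_{\mathrm{LSQ}}$, with $\phi(v,y)=\varphi(yv)$. Let $\bar g\in\operatorname{argmin}_{g:\mathbb{R}^d\to\mathbb{R}}\mathbb{E}[\phi(g(X),Y)]$. Then $\frac{1}{1+e^{-\bar g(x)}}=p_1(x)$ for almost every $x$ (with respect to the distribution of $X$) when $\varphi\in\{\varphi_{\mathrm{LR}},\varphi_{\mathrm{MLS},\alpha},\varphi_{\mathrm{LSQ}}\}$, and $s_\alpha^{-1}\big(\frac{1}{1+e^{-\bar g(x)}}\big)=p_1(x)$ for almost every $x$ when $\varphi=\varphi_{\mathrm{LS},\alpha}$.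
   Context: The losses are: $\varphi_{\mathrm{LR}}(v)=-\ln\frac{1}{1+e^{-v}}$; $\varphi_{\mathrm{LS},\alpha}(v)=-(1-\frac{\alpha}{2})\ln\frac{1}{1+e^{-v}}-\frac{\alpha}{2}\ln\frac{1}{1+e^{v}}$; $\varphi_{\mathrm{MLS},\alpha}(v)=-(1-\frac{\alpha}{2})\ln\big(\frac{1-\alpha}{1+e^{-v}}+\frac{\alpha}{2}\big)-\frac{\alpha}{2}\ln\big(\frac{1-\alpha}{1+e^{v}}+\frac{\alpha}{2}\big)$; $\varphi_{\mathrm{LSQ}}(v)=\frac{1}{2(1+e^{v})^2}$. Here $s_\alpha(u)=(1-\alpha)u+\frac{\alpha}{2}$ and $s_\alpha^{-1}(u)=(u-\frac{\alpha}{2})/(1-\alpha)$. The minimization is over measurable functions $g$. *)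

theory Defs
  imports "HOL-Probability.Probability"
begin

definition sigmoid :: "real \<Rightarrow> real" where
  "sigmoid v = 1 / (1 + exp (- v))"

definition phi_LR :: "real \<Rightarrow> real" where
  "phi_LR v = - ln (1 / (1 + exp (- v)))"

definition phi_LS :: "real \<Rightarrow> real \<Rightarrow> real" where
  "phi_LS \<alpha> v = - (1 - \<alpha>/2) * ln (1 / (1 + exp (- v))) - (\<alpha>/2) * ln (1 / (1 + exp v))"

definition phi_MLS :: "real \<Rightarrow> real \<Rightarrow> real" where
  "phi_MLS \<alpha> v = - (1 - \<alpha>/2) * ln ((1 - \<alpha>) / (1 + exp (- v)) + \<alpha>/2)
                   - (\<alpha>/2) * ln ((1 - \<alpha>) / (1 + exp v) + \<alpha>/2)"

definition phi_LSQ :: "real \<Rightarrow> real" where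
  "phi_LSQ v = 1 / (2 * (1 + exp v)^2)"

definition s_alpha :: "real \<Rightarrow> real \<Rightarrow> real" where
  "s_alpha \<alpha> u = (1 - \<alpha>) * u + \<alpha>/2"

definition s_alpha_inv :: "real \<Rightarrow> real \<Rightarrow> real" where
  "s_alpha_inv \<alpha> u = (u - \<alpha>/2) / (1 - \<alpha>)"

text \<open>Expected surrogate risk E[phi(g(X),Y)] with phi(v,y) = varphi(y v).
  All four losses are nonnegative, so the nonnegative integral is used.\<close>
definition risk :: "'s measure \<Rightarrow> ('s \<Rightarrow> 'x) \<Rightarrow> ('s \<Rightarrow> real) \<Rightarrow> (real \<Rightarrow> real) \<Rightarrow> ('x \<Rightarrow> real) \<Rightarrow> ennreal" where
  "risk M X Y \<phi> g = (\<integral>\<^sup>+ \<omega>. ennreal (\<phi> (Y \<omega> * g (X \<omega>))) \<partial>M)"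

text \<open>p1 is a (version of the) conditional probability Pr(Y = +1 | X = x).\<close>
definition is_cond_prob_pos :: "'s measure \<Rightarrow> ('s \<Rightarrow> 'x::topological_space) \<Rightarrow> ('s \<Rightarrow> real) \<Rightarrow> ('x \<Rightarrow> real) \<Rightarrow> bool" where
  "is_cond_prob_pos M X Y p1 \<longleftrightarrow>
     p1 \<in> borel_measurable borel \<and> (\<forall>x. 0 \<le> p1 x \<and> p1 x \<le> 1) \<and>
     (\<forall>A \<in> sets borel. measure M {\<omega> \<in> space M. X \<omega> \<in> A \<and> Y \<omega> = 1}
                        = (\<integral>x\<in>A. p1 x \<partial>(distr M borel X)))"

end

(*
  Conditioning on X, the risk of a score h is the integral over the law of X of the conditional
  risk C(p1 x, h x), where C(p, v) = p phi(v) + (1 - p) phi(-v). The three logarithmic losses are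
  cross entropies against a smoothed label, so C(p, v) is the cross entropy between the label
  distribution p (smoothed to s_alpha p for phi_LS) and the prediction sigmoid v (smoothed to
  s_alpha (sigmoid v) for phi_MLS); for the square loss, C(p, v) = (sigmoid v - p)^2/2 up to a
  term not depending on v. In every case, moving sigmoid v halfway towards its target strictly
  lowers C unless sigmoid v already equals the target. Applied pointwise to a risk minimiser g this
  gives a measurable score whose risk would be smaller unless sigmoid (g x) is on target for almost
  every x.
*)
theory Submission
  imports Defs
begin

lemma sigmoid_pos: "0 < sigmoid v"
  and sigmoid_less_1: "sigmoid v < 1"
  unfolding sigmoid_def by (auto simp: add_pos_pos)

lemma sigmoid_minus: "sigmoid (- v) = 1 - sigmoid v"
proof -
  have "0 < 1 + exp v" by (simp add: add_pos_pos)
  then show ?thesis unfolding sigmoid_def by (simp add: exp_minus field_simps)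
qed

lemma sigmoid_eq_iff: "sigmoid v = sigmoid w \<longleftrightarrow> v = w"
  unfolding sigmoid_def by (auto simp: add_pos_pos)

lemma sigmoid_logit:
  assumes "0 < u" "u < 1"
  shows "sigmoid (ln (u / (1 - u))) = u"
  using assms unfolding sigmoid_def by (simp add: exp_minus field_simps)

lemma borel_measurable_sigmoid [measurable]: "sigmoid \<in> borel_measurable borel"
  unfolding sigmoid_def[abs_def] by measurable

lemma s_alpha_one_minus: "s_alpha \<alpha> (1 - u) = 1 - s_alpha \<alpha> u"
  unfolding s_alpha_def by (simp add: algebra_simps)

lemma s_alpha_eq_mixture: "p * (1 - \<alpha>/2) + (1 - p) * (1 - (1 - \<alpha>/2)) = s_alpha \<alpha> p"
  unfolding s_alpha_def by (simp add: field_simps)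

lemma s_alpha_inv_s_alpha: "\<alpha> < 1 \<Longrightarrow> s_alpha_inv \<alpha> (s_alpha \<alpha> p) = p"
  unfolding s_alpha_inv_def s_alpha_def by (simp add: field_simps)

lemma s_alpha_midpoint: "s_alpha \<alpha> ((u + v) / 2) = (s_alpha \<alpha> u + s_alpha \<alpha> v) / 2"
  unfolding s_alpha_def by (simp add: field_simps)

lemma s_alpha_eq_iff: "\<alpha> < 1 \<Longrightarrow> s_alpha \<alpha> u = s_alpha \<alpha> v \<longleftrightarrow> u = v"
  unfolding s_alpha_def by simp

lemma s_alpha_nonneg: "0 \<le> \<alpha> \<Longrightarrow> \<alpha> < 1 \<Longrightarrow> 0 \<le> u \<Longrightarrow> 0 \<le> s_alpha \<alpha> u"
  unfolding s_alpha_def by (intro add_nonneg_nonneg mult_nonneg_nonneg) auto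

lemma s_alpha_pos: "0 \<le> \<alpha> \<Longrightarrow> \<alpha> < 1 \<Longrightarrow> 0 < u \<Longrightarrow> 0 < s_alpha \<alpha> u"
  unfolding s_alpha_def by (intro add_pos_nonneg mult_pos_pos) auto

lemma s_alpha_le_1:
  assumes "0 \<le> \<alpha>" "\<alpha> < 1" "u \<le> 1"
  shows "s_alpha \<alpha> u \<le> 1"
proof -
  have "(1 - \<alpha>) * u \<le> 1 - \<alpha>" using assms mult_left_mono[of u 1 "1 - \<alpha>"] by simp
  then show ?thesis unfolding s_alpha_def using assms by linarith
qed

lemma s_alpha_less_1:
  assumes "0 \<le> \<alpha>" "\<alpha> < 1" "u < 1"
  shows "s_alpha \<alpha> u < 1"
proof -
  have "(1 - \<alpha>) * u < 1 - \<alpha>" using assms mult_strict_left_mono[of u 1 "1 - \<alpha>"] by simp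
  then show ?thesis unfolding s_alpha_def using assms by linarith
qed

lemma borel_measurable_s_alpha [measurable]: "s_alpha \<alpha> \<in> borel_measurable borel"
  unfolding s_alpha_def[abs_def] by measurable

definition cross_entropy :: "real \<Rightarrow> real \<Rightarrow> real" where
  "cross_entropy a u = - a * ln u - (1 - a) * ln (1 - u)"

lemma cross_entropy_nonneg:
  assumes "0 \<le> a" "a \<le> 1" "0 < u" "u < 1"
  shows "0 \<le> cross_entropy a u"
proof -
  have "ln u \<le> 0" "ln (1 - u) \<le> 0" using assms by auto
  then have "a * ln u \<le> 0" "(1 - a) * ln (1 - u) \<le> 0"
    using assms by (simp_all add: mult_nonneg_nonpos)
  then show ?thesis unfolding cross_entropy_def by linarith
qed

lemma cross_entropy_midpoint_less:
  assumes "0 \<le> a" "a \<le> 1" "0 < u" "u < 1" "u \<noteq> a"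
  shows "cross_entropy a ((u + a) / 2) < cross_entropy a u"
proof -
  define w where "w = (u + a) / 2"
  have w: "0 < w" "w < 1" using assms unfolding w_def by auto
  have "ln (u / w) \<le> u / w - 1" "ln ((1 - u) / (1 - w)) \<le> (1 - u) / (1 - w) - 1"
    using assms w by (auto intro: ln_le_minus_one)
  then have "ln u - ln w \<le> u / w - 1" "ln (1 - u) - ln (1 - w) \<le> (1 - u) / (1 - w) - 1"
    using assms w by (simp_all add: ln_div)
  then have "a * (1 - u / w) \<le> a * (ln w - ln u)"
    "(1 - a) * (1 - (1 - u) / (1 - w)) \<le> (1 - a) * (ln (1 - w) - ln (1 - u))"
    using assms by (simp_all add: mult_left_mono)
  then have "a * (1 - u / w) + (1 - a) * (1 - (1 - u) / (1 - w))
      \<le> cross_entropy a u - cross_entropy a w"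
    unfolding cross_entropy_def by (simp add: algebra_simps)
  moreover have "a * (1 - u / w) + (1 - a) * (1 - (1 - u) / (1 - w)) = (w - u)\<^sup>2 / (w * (1 - w))"
  proof -
    have a: "a = 2 * w - u" unfolding w_def by (simp add: field_simps)
    show ?thesis unfolding a using w by (simp add: field_simps power2_eq_square)
  qed
  moreover have "0 < (w - u)\<^sup>2 / (w * (1 - w))"
    using w assms unfolding w_def by (intro divide_pos_pos) auto
  ultimately show ?thesis unfolding w_def by linarith
qed

definition cond_risk :: "(real \<Rightarrow> real) \<Rightarrow> real \<Rightarrow> real \<Rightarrow> real" where
  "cond_risk \<phi> p v = p * \<phi> v + (1 - p) * \<phi> (- v)"

lemma borel_measurable_cond_risk [measurable (raw)]:
  assumes [measurable]: "\<phi> \<in> borel_measurable borel" "p \<in> borel_measurable M" "v \<in> borel_measurable M"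
  shows "(\<lambda>x. cond_risk \<phi> (p x) (v x)) \<in> borel_measurable M"
  unfolding cond_risk_def by measurable

lemma cond_risk_nonneg:
  assumes "0 \<le> p" "p \<le> 1" "\<And>v. 0 \<le> \<phi> v"
  shows "0 \<le> cond_risk \<phi> p v"
  unfolding cond_risk_def using assms by simp

lemma cond_risk_cross_entropy:
  assumes "\<And>v. F (- v) = 1 - F v"
  shows "cond_risk (\<lambda>v. cross_entropy c (F v)) p v = cross_entropy (p * c + (1 - p) * (1 - c)) (F v)"
  unfolding cond_risk_def cross_entropy_def assms by (simp add: algebra_simps)

lemma phi_LR_eq: "phi_LR = (\<lambda>v. cross_entropy 1 (sigmoid v))"
  by (simp add: fun_eq_iff phi_LR_def cross_entropy_def sigmoid_def)

lemma phi_LS_eq: "phi_LS \<alpha> = (\<lambda>v. cross_entropy (1 - \<alpha>/2) (sigmoid v))"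
proof -
  have "phi_LS \<alpha> v = - (1 - \<alpha>/2) * ln (sigmoid v) - (\<alpha>/2) * ln (sigmoid (- v))" for v
    by (simp add: phi_LS_def sigmoid_def)
  then show ?thesis
    by (simp add: fun_eq_iff cross_entropy_def sigmoid_minus)
qed

lemma phi_MLS_eq: "phi_MLS \<alpha> = (\<lambda>v. cross_entropy (1 - \<alpha>/2) (s_alpha \<alpha> (sigmoid v)))"
proof -
  have "(1 - \<alpha>) / (1 + exp v) + \<alpha>/2 = s_alpha \<alpha> (sigmoid (- v))" for v
    by (simp add: s_alpha_def sigmoid_def)
  then show ?thesis
    by (simp add: fun_eq_iff phi_MLS_def cross_entropy_def sigmoid_minus s_alpha_one_minus)
qed

lemma borel_measurable_phi_LR [measurable]: "phi_LR \<in> borel_measurable borel"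
  unfolding phi_LR_eq cross_entropy_def by measurable

lemma borel_measurable_phi_LS [measurable]: "phi_LS \<alpha> \<in> borel_measurable borel"
  unfolding phi_LS_eq cross_entropy_def by measurable

lemma borel_measurable_phi_MLS [measurable]: "phi_MLS \<alpha> \<in> borel_measurable borel"
  unfolding phi_MLS_eq cross_entropy_def by measurable

lemma borel_measurable_phi_LSQ [measurable]: "phi_LSQ \<in> borel_measurable borel"
  unfolding phi_LSQ_def[abs_def] by measurable

lemma phi_LR_nonneg: "0 \<le> phi_LR v"
  unfolding phi_LR_eq by (rule cross_entropy_nonneg) (simp_all add: sigmoid_pos sigmoid_less_1)

lemma phi_LS_nonneg: "0 \<le> \<alpha> \<Longrightarrow> \<alpha> < 1 \<Longrightarrow> 0 \<le> phi_LS \<alpha> v"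
  unfolding phi_LS_eq by (rule cross_entropy_nonneg) (simp_all add: sigmoid_pos sigmoid_less_1)

lemma phi_MLS_nonneg: "0 \<le> \<alpha> \<Longrightarrow> \<alpha> < 1 \<Longrightarrow> 0 \<le> phi_MLS \<alpha> v"
  unfolding phi_MLS_eq
  by (rule cross_entropy_nonneg) (simp_all add: sigmoid_pos sigmoid_less_1 s_alpha_pos s_alpha_less_1)

lemma phi_LSQ_nonneg: "0 \<le> phi_LSQ v"
  unfolding phi_LSQ_def by simp

lemma cond_risk_phi_LR: "cond_risk phi_LR p v = cross_entropy p (sigmoid v)"
  unfolding phi_LR_eq cond_risk_cross_entropy[where F = sigmoid, OF sigmoid_minus] by simp

lemma cond_risk_phi_LS: "cond_risk (phi_LS \<alpha>) p v = cross_entropy (s_alpha \<alpha> p) (sigmoid v)"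
  unfolding phi_LS_eq cond_risk_cross_entropy[where F = sigmoid, OF sigmoid_minus] s_alpha_eq_mixture ..

lemma cond_risk_phi_MLS:
  "cond_risk (phi_MLS \<alpha>) p v = cross_entropy (s_alpha \<alpha> p) (s_alpha \<alpha> (sigmoid v))"
proof -
  have "s_alpha \<alpha> (sigmoid (- v)) = 1 - s_alpha \<alpha> (sigmoid v)" for v
    by (simp add: sigmoid_minus s_alpha_one_minus)
  then have "cond_risk (phi_MLS \<alpha>) p v = cross_entropy (p * (1 - \<alpha>/2) + (1 - p) * (1 - (1 - \<alpha>/2)))
      (s_alpha \<alpha> (sigmoid v))"
    unfolding phi_MLS_eq by (rule cond_risk_cross_entropy)
  then show ?thesis unfolding s_alpha_eq_mixture .
qed

lemma cond_risk_phi_LSQ: "cond_risk phi_LSQ p v = (sigmoid v - p)\<^sup>2 / 2 + p * (1 - p) / 2"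
proof -
  have "phi_LSQ v = (sigmoid (- v))\<^sup>2 / 2" for v
    by (simp add: phi_LSQ_def sigmoid_def power_divide)
  then have "phi_LSQ v = (1 - sigmoid v)\<^sup>2 / 2" and "phi_LSQ (- v) = (sigmoid v)\<^sup>2 / 2"
    by (simp_all add: sigmoid_minus)
  then show ?thesis
    unfolding cond_risk_def by (simp only:) (simp add: field_simps power2_eq_square)
qed

lemma cond_risk_phi_LR_midpoint_less:
  assumes "0 \<le> p" "p \<le> 1" "sigmoid w = (sigmoid v + p) / 2" "sigmoid v \<noteq> p"
  shows "cond_risk phi_LR p w < cond_risk phi_LR p v"
  unfolding cond_risk_phi_LR assms(3)
  by (rule cross_entropy_midpoint_less) (use assms in \<open>simp_all add: sigmoid_pos sigmoid_less_1\<close>)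

lemma cond_risk_phi_LS_midpoint_less:
  assumes "0 \<le> \<alpha>" "\<alpha> < 1" "0 \<le> p" "p \<le> 1"
    and "sigmoid w = (sigmoid v + s_alpha \<alpha> p) / 2" "sigmoid v \<noteq> s_alpha \<alpha> p"
  shows "cond_risk (phi_LS \<alpha>) p w < cond_risk (phi_LS \<alpha>) p v"
  unfolding cond_risk_phi_LS assms(5)
  by (rule cross_entropy_midpoint_less)
    (use assms in \<open>simp_all add: s_alpha_nonneg s_alpha_le_1 sigmoid_pos sigmoid_less_1\<close>)

lemma cond_risk_phi_MLS_midpoint_less:
  assumes "0 \<le> \<alpha>" "\<alpha> < 1" "0 \<le> p" "p \<le> 1"
    and "sigmoid w = (sigmoid v + p) / 2" "sigmoid v \<noteq> p"
  shows "cond_risk (phi_MLS \<alpha>) p w < cond_risk (phi_MLS \<alpha>) p v"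
  unfolding cond_risk_phi_MLS assms(5) s_alpha_midpoint
  by (rule cross_entropy_midpoint_less)
    (use assms in \<open>simp_all add: s_alpha_eq_iff s_alpha_nonneg s_alpha_le_1 s_alpha_pos
      s_alpha_less_1 sigmoid_pos sigmoid_less_1\<close>)

lemma cond_risk_phi_LSQ_midpoint_less:
  assumes "sigmoid w = (sigmoid v + p) / 2" "sigmoid v \<noteq> p"
  shows "cond_risk phi_LSQ p w < cond_risk phi_LSQ p v"
proof -
  have "(sigmoid w - p)\<^sup>2 = (sigmoid v - p)\<^sup>2 / 4"
    unfolding assms(1) by (simp add: field_simps power2_eq_square)
  moreover have "0 < (sigmoid v - p)\<^sup>2" using assms(2) by simp
  ultimately have "(sigmoid w - p)\<^sup>2 < (sigmoid v - p)\<^sup>2" by linarith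
  then show ?thesis by (simp add: cond_risk_phi_LSQ)
qed

lemma (in finite_measure) distr_density_event:
  fixes X :: "'a \<Rightarrow> 'x::topological_space"
  assumes X: "X \<in> borel_measurable M" and E: "{\<omega> \<in> space M. Q \<omega>} \<in> sets M"
    and q: "q \<in> borel_measurable borel" "\<And>x. 0 \<le> q x" "\<And>x. q x \<le> 1"
    and joint: "\<And>A. A \<in> sets borel \<Longrightarrow>
      measure M {\<omega> \<in> space M. X \<omega> \<in> A \<and> Q \<omega>} = (\<integral>x\<in>A. q x \<partial>distr M borel X)"
  shows "distr (density M (indicator {\<omega> \<in> space M. Q \<omega>})) borel X = density (distr M borel X) q"
proof (rule measure_eqI)
  interpret PX: finite_measure "distr M borel X" using X by (rule finite_measure_distr)
  fix A assume "A \<in> sets (distr (density M (indicator {\<omega> \<in> space M. Q \<omega>})) borel X)"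
  then have A: "A \<in> sets borel" by simp
  have event_A: "{\<omega> \<in> space M. X \<omega> \<in> A \<and> Q \<omega>} = (X -` A \<inter> space M) \<inter> {\<omega> \<in> space M. Q \<omega>}"
    by auto
  have "emeasure (distr (density M (indicator {\<omega> \<in> space M. Q \<omega>})) borel X) A
      = (\<integral>\<^sup>+\<omega>. indicator {\<omega> \<in> space M. Q \<omega>} \<omega> * indicator (X -` A \<inter> space M) \<omega> \<partial>M)"
    using X A E by (simp add: emeasure_distr emeasure_density measurable_sets)
  also have "\<dots> = (\<integral>\<^sup>+\<omega>. indicator {\<omega> \<in> space M. X \<omega> \<in> A \<and> Q \<omega>} \<omega> \<partial>M)"
    by (intro nn_integral_cong) (auto split: split_indicator)
  also have "\<dots> = emeasure M {\<omega> \<in> space M. X \<omega> \<in> A \<and> Q \<omega>}"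
    using X A E unfolding event_A by (intro nn_integral_indicator) (auto intro: measurable_sets)
  also have "\<dots> = ennreal (\<integral>x\<in>A. q x \<partial>distr M borel X)"
    by (simp add: emeasure_eq_measure joint A)
  also have "\<dots> = (\<integral>\<^sup>+x\<in>A. q x \<partial>distr M borel X)"
    using q A by (intro nn_set_integral_eq_set_integral[symmetric] PX.integrable_const_bound[where B = 1]) auto
  also have "\<dots> = emeasure (density (distr M borel X) q) A"
    using A q by (simp add: emeasure_density mult.commute)
  finally show "emeasure (distr (density M (indicator {\<omega> \<in> space M. Q \<omega>})) borel X) A
      = emeasure (density (distr M borel X) q) A" .
qed simp

lemma (in finite_measure) nn_integral_event_distr:
  fixes X :: "'a \<Rightarrow> 'x::topological_space"
  assumes X: "X \<in> borel_measurable M" and E: "{\<omega> \<in> space M. Q \<omega>} \<in> sets M"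
    and q: "q \<in> borel_measurable borel" "\<And>x. 0 \<le> q x" "\<And>x. q x \<le> 1"
    and joint: "\<And>A. A \<in> sets borel \<Longrightarrow>
      measure M {\<omega> \<in> space M. X \<omega> \<in> A \<and> Q \<omega>} = (\<integral>x\<in>A. q x \<partial>distr M borel X)"
    and f: "f \<in> borel_measurable borel"
  shows "(\<integral>\<^sup>+\<omega>. indicator {\<omega> \<in> space M. Q \<omega>} \<omega> * f (X \<omega>) \<partial>M)
    = (\<integral>\<^sup>+x. ennreal (q x) * f x \<partial>distr M borel X)"
proof -
  have "(\<integral>\<^sup>+\<omega>. indicator {\<omega> \<in> space M. Q \<omega>} \<omega> * f (X \<omega>) \<partial>M)
      = (\<integral>\<^sup>+x. f x \<partial>distr (density M (indicator {\<omega> \<in> space M. Q \<omega>})) borel X)"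
    using X E f by (simp add: nn_integral_density nn_integral_distr)
  also have "\<dots> = (\<integral>\<^sup>+x. ennreal (q x) * f x \<partial>distr M borel X)"
    using f q by (simp add: distr_density_event[OF X E q joint] nn_integral_density)
  finally show ?thesis .
qed

locale binary_classification = prob_space M for M :: "'s measure" +
  fixes X :: "'s \<Rightarrow> 'x::topological_space" and Y :: "'s \<Rightarrow> real" and p1 :: "'x \<Rightarrow> real"
  assumes X_measurable [measurable]: "X \<in> borel_measurable M"
    and Y_measurable [measurable]: "Y \<in> borel_measurable M"
    and Y_sign: "\<forall>\<omega>\<in>space M. Y \<omega> = 1 \<or> Y \<omega> = -1"
    and cond_prob_pos: "is_cond_prob_pos M X Y p1"
begin

lemma p1_measurable [measurable]: "p1 \<in> borel_measurable borel"
  and p1_nonneg: "0 \<le> p1 x"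
  and p1_le_1: "p1 x \<le> 1"
  and measure_pos_class: "A \<in> sets borel \<Longrightarrow>
    measure M {\<omega> \<in> space M. X \<omega> \<in> A \<and> Y \<omega> = 1} = (\<integral>x\<in>A. p1 x \<partial>distr M borel X)"
  using cond_prob_pos unfolding is_cond_prob_pos_def by auto

lemma measure_neg_class:
  assumes A: "A \<in> sets borel"
  shows "measure M {\<omega> \<in> space M. X \<omega> \<in> A \<and> Y \<omega> = -1} = (\<integral>x\<in>A. 1 - p1 x \<partial>distr M borel X)"
proof -
  interpret PX: prob_space "distr M borel X" by (simp add: prob_space_distr)
  have "set_integrable (distr M borel X) A (\<lambda>_. 1 :: real)"
    unfolding set_integrable_def using A
    by (intro PX.integrable_const_bound[where B = 1]) (auto split: split_indicator)
  moreover have "set_integrable (distr M borel X) A p1"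
    unfolding set_integrable_def using A p1_nonneg p1_le_1
    by (intro PX.integrable_const_bound[where B = 1]) (auto split: split_indicator)
  ultimately have integral_diff:
    "(\<integral>x\<in>A. 1 - p1 x \<partial>distr M borel X) = (\<integral>x\<in>A. 1 \<partial>distr M borel X) - (\<integral>x\<in>A. p1 x \<partial>distr M borel X)"
    by (rule set_integral_diff(2))
  have "{\<omega> \<in> space M. X \<omega> \<in> A \<and> Y \<omega> = 1} \<union> {\<omega> \<in> space M. X \<omega> \<in> A \<and> Y \<omega> = -1}
      = X -` A \<inter> space M"
    using Y_sign by auto
  then have "measure M {\<omega> \<in> space M. X \<omega> \<in> A \<and> Y \<omega> = 1}
      + measure M {\<omega> \<in> space M. X \<omega> \<in> A \<and> Y \<omega> = -1} = measure (distr M borel X) A"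
    using A by (subst finite_measure_Union[symmetric]) (auto simp: measure_distr)
  moreover have "measure (distr M borel X) A = (\<integral>x\<in>A. 1 \<partial>distr M borel X)"
    using A by (subst set_integral_const) auto
  ultimately show ?thesis
    using measure_pos_class[OF A] integral_diff by simp
qed

lemma risk_eq_nn_integral_cond_risk:
  assumes [measurable]: "\<phi> \<in> borel_measurable borel" "h \<in> borel_measurable borel"
    and \<phi>_nonneg: "\<And>v. 0 \<le> \<phi> v"
  shows "risk M X Y \<phi> h = (\<integral>\<^sup>+x. ennreal (cond_risk \<phi> (p1 x) (h x)) \<partial>distr M borel X)"
proof -
  have "risk M X Y \<phi> h = (\<integral>\<^sup>+\<omega>. indicator {\<omega> \<in> space M. Y \<omega> = 1} \<omega> * ennreal (\<phi> (h (X \<omega>)))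
      + indicator {\<omega> \<in> space M. Y \<omega> = -1} \<omega> * ennreal (\<phi> (- h (X \<omega>))) \<partial>M)"
    unfolding risk_def using Y_sign by (intro nn_integral_cong) (auto simp: indicator_def)
  also have "\<dots> = (\<integral>\<^sup>+\<omega>. indicator {\<omega> \<in> space M. Y \<omega> = 1} \<omega> * ennreal (\<phi> (h (X \<omega>))) \<partial>M)
      + (\<integral>\<^sup>+\<omega>. indicator {\<omega> \<in> space M. Y \<omega> = -1} \<omega> * ennreal (\<phi> (- h (X \<omega>))) \<partial>M)"
    by (intro nn_integral_add) auto
  also have "\<dots> = (\<integral>\<^sup>+x. ennreal (p1 x) * ennreal (\<phi> (h x)) \<partial>distr M borel X)
      + (\<integral>\<^sup>+x. ennreal (1 - p1 x) * ennreal (\<phi> (- h x)) \<partial>distr M borel X)"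
  proof -
    have "{\<omega> \<in> space M. Y \<omega> = 1} \<in> sets M" "{\<omega> \<in> space M. Y \<omega> = -1} \<in> sets M"
      by measurable
    moreover have "(\<lambda>x. 1 - p1 x) \<in> borel_measurable borel" "0 \<le> 1 - p1 x" "1 - p1 x \<le> 1" for x
      using p1_nonneg p1_le_1 by auto
    ultimately show ?thesis
      using nn_integral_event_distr[OF X_measurable _ p1_measurable p1_nonneg p1_le_1
          measure_pos_class, where f = "\<lambda>x. ennreal (\<phi> (h x))"]
        nn_integral_event_distr[OF X_measurable _ _ _ _ measure_neg_class,
          where f = "\<lambda>x. ennreal (\<phi> (- h x))"]
      by simp
  qed
  also have "\<dots> = (\<integral>\<^sup>+x. ennreal (cond_risk \<phi> (p1 x) (h x)) \<partial>distr M borel X)"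
    using p1_nonneg p1_le_1 \<phi>_nonneg
    by (simp add: nn_integral_add[symmetric] cond_risk_def ennreal_mult ennreal_plus)
  finally show ?thesis .
qed

lemma risk_minimizer_cond_risk_AE_le:
  assumes [measurable]: "\<phi> \<in> borel_measurable borel" "g \<in> borel_measurable borel"
      "h \<in> borel_measurable borel"
    and \<phi>_nonneg: "\<And>v. 0 \<le> \<phi> v"
    and minimizer: "\<forall>h \<in> borel_measurable borel. risk M X Y \<phi> g \<le> risk M X Y \<phi> h"
    and improvement: "\<And>x. cond_risk \<phi> (p1 x) (h x) \<le> cond_risk \<phi> (p1 x) (g x)"
  shows "AE x in distr M borel X. cond_risk \<phi> (p1 x) (g x) \<le> cond_risk \<phi> (p1 x) (h x)"
proof (rule ccontr)
  assume not_AE: "\<not> (AE x in distr M borel X. cond_risk \<phi> (p1 x) (g x) \<le> cond_risk \<phi> (p1 x) (h x))"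
  have risk_eq: "risk M X Y \<phi> f = (\<integral>\<^sup>+x. ennreal (cond_risk \<phi> (p1 x) (f x)) \<partial>distr M borel X)"
    if "f \<in> borel_measurable borel" for f
    using that \<phi>_nonneg by (intro risk_eq_nn_integral_cond_risk) auto
  have "risk M X Y \<phi> h \<le> risk M X Y \<phi> g"
    unfolding risk_eq[OF assms(2)] risk_eq[OF assms(3)]
    using improvement by (intro nn_integral_mono) (simp add: ennreal_leI)
  also have "\<dots> \<le> risk M X Y \<phi> (\<lambda>_. 0)"
    using minimizer by simp
  also have "\<dots> = ennreal (\<phi> 0)"
    unfolding risk_def by (simp add: emeasure_space_1)
  finally have finite: "risk M X Y \<phi> h \<noteq> \<infinity>"
    by (metis ennreal_neq_top infinity_ennreal_def neq_top_trans)
  have "risk M X Y \<phi> h < risk M X Y \<phi> g"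
    unfolding risk_eq[OF assms(2)] risk_eq[OF assms(3)]
  proof (rule nn_integral_less[OF _ _ finite[unfolded risk_eq[OF assms(3)]]])
    show "AE x in distr M borel X.
        ennreal (cond_risk \<phi> (p1 x) (h x)) \<le> ennreal (cond_risk \<phi> (p1 x) (g x))"
      using improvement by (simp add: ennreal_leI)
    show "\<not> (AE x in distr M borel X.
        ennreal (cond_risk \<phi> (p1 x) (g x)) \<le> ennreal (cond_risk \<phi> (p1 x) (h x)))"
      using not_AE cond_risk_nonneg[OF p1_nonneg p1_le_1 \<phi>_nonneg] by (simp add: ennreal_le_iff)
  qed measurable
  moreover have "risk M X Y \<phi> g \<le> risk M X Y \<phi> h"
    using minimizer assms(3) by blast
  ultimately show False by simp
qed

lemma risk_minimizer_sigmoid_AE_eq: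
  assumes [measurable]: "\<phi> \<in> borel_measurable borel" "g \<in> borel_measurable borel"
      "T \<in> borel_measurable borel"
    and \<phi>_nonneg: "\<And>v. 0 \<le> \<phi> v"
    and minimizer: "\<forall>h \<in> borel_measurable borel. risk M X Y \<phi> g \<le> risk M X Y \<phi> h"
    and T_range: "\<And>p. 0 \<le> p \<Longrightarrow> p \<le> 1 \<Longrightarrow> 0 \<le> T p \<and> T p \<le> 1"
    and midpoint_less: "\<And>p v w. 0 \<le> p \<Longrightarrow> p \<le> 1 \<Longrightarrow> sigmoid w = (sigmoid v + T p) / 2 \<Longrightarrow>
      sigmoid v \<noteq> T p \<Longrightarrow> cond_risk \<phi> p w < cond_risk \<phi> p v"
  shows "AE x in distr M borel X. sigmoid (g x) = T (p1 x)"
proof -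
  \<comment> \<open>only halfway towards T (p1 x), so that h stays finite where T (p1 x) is 0 or 1\<close>
  define u where "u = (\<lambda>x. (sigmoid (g x) + T (p1 x)) / 2)"
  define h where "h = (\<lambda>x. ln (u x / (1 - u x)))"
  have sigmoid_h: "sigmoid (h x) = (sigmoid (g x) + T (p1 x)) / 2" for x
  proof -
    have "0 < u x" "u x < 1"
      using T_range[OF p1_nonneg p1_le_1, of x] sigmoid_pos[of "g x"] sigmoid_less_1[of "g x"]
      unfolding u_def by auto
    then have "sigmoid (h x) = u x" unfolding h_def by (rule sigmoid_logit)
    then show ?thesis by (simp add: u_def)
  qed
  have h_measurable: "h \<in> borel_measurable borel"
    unfolding h_def u_def by measurable
  have less: "cond_risk \<phi> (p1 x) (h x) < cond_risk \<phi> (p1 x) (g x)"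
    if "sigmoid (g x) \<noteq> T (p1 x)" for x
    using midpoint_less[OF p1_nonneg p1_le_1 sigmoid_h that] .
  have "cond_risk \<phi> (p1 x) (h x) \<le> cond_risk \<phi> (p1 x) (g x)" for x
  proof (cases "sigmoid (g x) = T (p1 x)")
    case True
    then have "sigmoid (h x) = sigmoid (g x)" using sigmoid_h[of x] by simp
    then have "h x = g x" by (simp add: sigmoid_eq_iff)
    then show ?thesis by simp
  qed (use less in \<open>auto intro: less_imp_le\<close>)
  then have "AE x in distr M borel X. cond_risk \<phi> (p1 x) (g x) \<le> cond_risk \<phi> (p1 x) (h x)"
    by (intro risk_minimizer_cond_risk_AE_le[OF _ _ h_measurable \<phi>_nonneg minimizer]) auto
  then show ?thesis
    by (rule eventually_mono) (use less in \<open>meson not_less\<close>)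
qed

lemma phi_LR_risk_minimizer:
  assumes "g \<in> borel_measurable borel"
    and "\<forall>h \<in> borel_measurable borel. risk M X Y phi_LR g \<le> risk M X Y phi_LR h"
  shows "AE x in distr M borel X. sigmoid (g x) = p1 x"
proof (rule risk_minimizer_sigmoid_AE_eq[where T = "\<lambda>p. p"])
  fix p v w :: real
  assume "0 \<le> p" "p \<le> 1" "sigmoid w = (sigmoid v + p) / 2" "sigmoid v \<noteq> p"
  then show "cond_risk phi_LR p w < cond_risk phi_LR p v"
    by (rule cond_risk_phi_LR_midpoint_less)
qed (use assms in \<open>simp_all add: phi_LR_nonneg\<close>)

lemma phi_LS_risk_minimizer:
  assumes "0 \<le> \<alpha>" "\<alpha> < 1" and "g \<in> borel_measurable borel"
    and "\<forall>h \<in> borel_measurable borel. risk M X Y (phi_LS \<alpha>) g \<le> risk M X Y (phi_LS \<alpha>) h"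
  shows "AE x in distr M borel X. sigmoid (g x) = s_alpha \<alpha> (p1 x)"
proof (rule risk_minimizer_sigmoid_AE_eq)
  fix p v w :: real
  assume "0 \<le> p" "p \<le> 1" "sigmoid w = (sigmoid v + s_alpha \<alpha> p) / 2" "sigmoid v \<noteq> s_alpha \<alpha> p"
  then show "cond_risk (phi_LS \<alpha>) p w < cond_risk (phi_LS \<alpha>) p v"
    by (rule cond_risk_phi_LS_midpoint_less[OF assms(1,2)])
qed (use assms in \<open>simp_all add: phi_LS_nonneg s_alpha_nonneg s_alpha_le_1\<close>)

lemma phi_MLS_risk_minimizer:
  assumes "0 \<le> \<alpha>" "\<alpha> < 1" and "g \<in> borel_measurable borel"
    and "\<forall>h \<in> borel_measurable borel. risk M X Y (phi_MLS \<alpha>) g \<le> risk M X Y (phi_MLS \<alpha>) h"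
  shows "AE x in distr M borel X. sigmoid (g x) = p1 x"
proof (rule risk_minimizer_sigmoid_AE_eq[where T = "\<lambda>p. p"])
  fix p v w :: real
  assume "0 \<le> p" "p \<le> 1" "sigmoid w = (sigmoid v + p) / 2" "sigmoid v \<noteq> p"
  then show "cond_risk (phi_MLS \<alpha>) p w < cond_risk (phi_MLS \<alpha>) p v"
    by (rule cond_risk_phi_MLS_midpoint_less[OF assms(1,2)])
qed (use assms in \<open>simp_all add: phi_MLS_nonneg\<close>)

lemma phi_LSQ_risk_minimizer:
  assumes "g \<in> borel_measurable borel"
    and "\<forall>h \<in> borel_measurable borel. risk M X Y phi_LSQ g \<le> risk M X Y phi_LSQ h"
  shows "AE x in distr M borel X. sigmoid (g x) = p1 x"
proof (rule risk_minimizer_sigmoid_AE_eq[where T = "\<lambda>p. p"])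
  fix p v w :: real
  assume "sigmoid w = (sigmoid v + p) / 2" "sigmoid v \<noteq> p"
  then show "cond_risk phi_LSQ p w < cond_risk phi_LSQ p v"
    by (rule cond_risk_phi_LSQ_midpoint_less)
qed (use assms in \<open>simp_all add: phi_LSQ_nonneg\<close>)

end

theorem corollary1:
  fixes M :: "'s measure" and X :: "'s \<Rightarrow> real ^ 'd" and Y :: "'s \<Rightarrow> real"
    and p1 :: "real ^ 'd \<Rightarrow> real" and \<alpha> :: real and \<phi> :: "real \<Rightarrow> real"
    and g :: "real ^ 'd \<Rightarrow> real"
  assumes "prob_space M"
    and "X \<in> borel_measurable M" and "Y \<in> borel_measurable M"
    and "\<forall>\<omega>\<in>space M. Y \<omega> = 1 \<or> Y \<omega> = -1"
    and "is_cond_prob_pos M X Y p1"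
    and "0 \<le> \<alpha>" and "\<alpha> < 1"
    and "\<phi> \<in> {phi_LR, phi_LS \<alpha>, phi_MLS \<alpha>, phi_LSQ}"
    and "g \<in> borel_measurable borel"
    and "\<forall>h \<in> borel_measurable borel. risk M X Y \<phi> g \<le> risk M X Y \<phi> h"
  shows "(\<phi> \<in> {phi_LR, phi_MLS \<alpha>, phi_LSQ} \<longrightarrow>
            (AE x in distr M borel X. sigmoid (g x) = p1 x))
       \<and> (\<phi> = phi_LS \<alpha> \<longrightarrow>
            (AE x in distr M borel X. s_alpha_inv \<alpha> (sigmoid (g x)) = p1 x))"
proof -
  interpret binary_classification M X Y p1
    using assms(1-5) by (simp add: binary_classification_def binary_classification_axioms_def)
  have "AE x in distr M borel X. sigmoid (g x) = p1 x" if "\<phi> \<in> {phi_LR, phi_MLS \<alpha>, phi_LSQ}"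
    using that phi_LR_risk_minimizer[OF assms(9)] phi_MLS_risk_minimizer[OF assms(6,7,9)]
      phi_LSQ_risk_minimizer[OF assms(9)] assms(10)
    by blast
  moreover have "AE x in distr M borel X. s_alpha_inv \<alpha> (sigmoid (g x)) = p1 x" if "\<phi> = phi_LS \<alpha>"
    using phi_LS_risk_minimizer[OF assms(6,7,9)] assms(10) that s_alpha_inv_s_alpha[OF assms(7)]
    by (auto elim: eventually_mono)
  ultimately show ?thesis by blast
qed

end
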